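(* Let $G$ be a simple connected graph. Then the following statements are equivalent: (i) $G\in\Gamma_{\leq 1}$, i.e. $\gamma(G)\le 1$; (ii) $G$ is $P_3$-free, i.e. no induced subgraph of $G$ is isomorphic to the path $P_3$ on three vertices; (iii) $G$ is a complete graph.
   Context: For a finite graph $G$ and indeterminates $X_G=\{x_u : u\in V(G)\}$, the generalized Laplacian matrix $L(G,X_G)$ is the $V(G)\times V(G)$ matrix over $\mathbb{Z}[X_G]$ whose $(u,u)$-entry is $x_u$ and whose $(u,v)$-entry for $u\neq v$ is $-m_{uv}$, where $m_{uv}$ is the number of edges between $u$ and $v$. For $1\le i\le |V(G)|$ the $i$-th critical ideal $I_i(G,X_G)$ is the ideal of $\mathbb{Z}[X_G]$ generated by all $i\times i$ minors of $L(G,X_G)$; by convention $I_i(G,X_G)=\langle 1\rangle$ for $i<1$ and $\langle 0\rangle$ for $i>|V(G)|$. The algebraic co-rank $\gamma(G)$ is the number of critical ideals of $G$ equal to $\langle 1\rangle$. $\Gamma_{\le k}$ denotes the set of simple connected graphs $G$ with $\gamma(G)\le k$. *)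

theory Defs
  imports "HOL-Library.Poly_Mapping" "Jordan_Normal_Form.Determinant"
begin

text \<open>Multivariate integer polynomials Z[x_v : v] as finitely supported maps from
  monomials (finitely supported exponent vectors) to integer coefficients.\<close>
type_synonym 'v mpoly_int = "('v \<Rightarrow>\<^sub>0 nat) \<Rightarrow>\<^sub>0 int"

definition var :: "'v \<Rightarrow> 'v mpoly_int" where
  "var v = Poly_Mapping.single (Poly_Mapping.single v 1) 1"

definition gen_ideal :: "'r::comm_ring_1 set \<Rightarrow> 'r set" where
  "gen_ideal S = {x. \<exists>F c. finite F \<and> F \<subseteq> S \<and> x = (\<Sum>s\<in>F. c s * s)}"

definition simple_graph :: "'v set \<Rightarrow> ('v \<Rightarrow> 'v \<Rightarrow> bool) \<Rightarrow> bool" where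
  "simple_graph V E \<longleftrightarrow> finite V \<and> (\<forall>u v. E u v \<longrightarrow> u \<in> V \<and> v \<in> V \<and> u \<noteq> v \<and> E v u)"

definition connected_graph :: "'v set \<Rightarrow> ('v \<Rightarrow> 'v \<Rightarrow> bool) \<Rightarrow> bool" where
  "connected_graph V E \<longleftrightarrow> V \<noteq> {} \<and> (\<forall>u\<in>V. \<forall>v\<in>V. E\<^sup>*\<^sup>* u v)"

definition gen_laplacian :: "('v \<Rightarrow> 'v \<Rightarrow> bool) \<Rightarrow> 'v \<Rightarrow> 'v \<Rightarrow> 'v mpoly_int" where
  "gen_laplacian E u v = (if u = v then var u else - (if E u v then 1 else 0))"

text \<open>i x i minors: determinants of the submatrices with rows r(0..i-1), columns c(0..i-1),
  r and c injective into V (each minor arises up to sign, so the generated ideal is the same).\<close>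
definition minors :: "'v set \<Rightarrow> ('v \<Rightarrow> 'v \<Rightarrow> bool) \<Rightarrow> nat \<Rightarrow> 'v mpoly_int set" where
  "minors V E i = {det (mat i i (\<lambda>(a, b). gen_laplacian E (r a) (c b))) | r c.
       inj_on r {0..<i} \<and> r ` {0..<i} \<subseteq> V \<and> inj_on c {0..<i} \<and> c ` {0..<i} \<subseteq> V}"

definition critical_ideal :: "'v set \<Rightarrow> ('v \<Rightarrow> 'v \<Rightarrow> bool) \<Rightarrow> nat \<Rightarrow> 'v mpoly_int set" where
  "critical_ideal V E i =
     (if i < 1 then gen_ideal {1} else if i > card V then gen_ideal {0} else gen_ideal (minors V E i))"

definition algebraic_corank :: "'v set \<Rightarrow> ('v \<Rightarrow> 'v \<Rightarrow> bool) \<Rightarrow> nat" where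
  "algebraic_corank V E = card {i \<in> {1..card V}. critical_ideal V E i = gen_ideal {1}}"

definition P3_free :: "'v set \<Rightarrow> ('v \<Rightarrow> 'v \<Rightarrow> bool) \<Rightarrow> bool" where
  "P3_free V E \<longleftrightarrow> \<not> (\<exists>f::nat \<Rightarrow> 'v. inj_on f {0,1,2} \<and> f ` {0,1,2} \<subseteq> V \<and>
      (\<forall>i\<in>{0,1,2}. \<forall>j\<in>{0,1,2}. E (f i) (f j) \<longleftrightarrow> (i = j + 1 \<or> j = i + 1)))"

definition complete_graph :: "'v set \<Rightarrow> ('v \<Rightarrow> 'v \<Rightarrow> bool) \<Rightarrow> bool" where
  "complete_graph V E \<longleftrightarrow> (\<forall>u\<in>V. \<forall>v\<in>V. u \<noteq> v \<longrightarrow> E u v)"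

end

theory Submission
  imports Defs
begin

text \<open>Substituting \<open>x\<^sub>v := -1\<close> for every variable is a ring homomorphism
  \<open>\<int>[X\<^sub>G] \<rightarrow> \<int>\<close>; for a complete graph it sends \<open>L(G, X\<^sub>G)\<close> to the all-\<open>(-1)\<close> matrix, which
  kills every minor of size at least 2, so no \<open>I\<^sub>i\<close> with \<open>i \<ge> 2\<close> is trivial. Conversely, a
  connected graph that is not complete contains an induced path \<open>u - w - v\<close>; the entry at
  \<open>(u, w)\<close> is the minor \<open>-1\<close>, and rows \<open>u, w\<close> with columns \<open>w, v\<close> give a lower triangular
  minor equal to \<open>1\<close>, so \<open>I\<^sub>1\<close> and \<open>I\<^sub>2\<close> are both trivial.\<close>

definition total_degree :: "('v \<Rightarrow>\<^sub>0 nat) \<Rightarrow> nat" where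
  "total_degree m = (\<Sum>k\<in>Poly_Mapping.keys m. Poly_Mapping.lookup m k)"

lemma total_degree_add: "total_degree (m + n) = total_degree m + total_degree n"
  unfolding total_degree_def by (rule setsum_keys_plus_distrib[where f = "\<lambda>_ x. x"]) auto

lemma total_degree_zero [simp]: "total_degree 0 = 0"
  by (simp add: total_degree_def)

definition eval_uniform :: "'r::comm_ring_1 \<Rightarrow> 'v mpoly_int \<Rightarrow> 'r" where
  "eval_uniform a p =
     (\<Sum>m\<in>Poly_Mapping.keys p. of_int (Poly_Mapping.lookup p m) * a ^ total_degree m)"

lemma eval_uniform_add: "eval_uniform a (p + q) = eval_uniform a p + eval_uniform a q"
  unfolding eval_uniform_def
  by (rule setsum_keys_plus_distrib[where f = "\<lambda>m c. of_int c * a ^ total_degree m"])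
     (simp_all add: distrib_right)

lemma eval_uniform_zero [simp]: "eval_uniform a 0 = 0"
  by (simp add: eval_uniform_def)

lemma eval_uniform_diff: "eval_uniform a (p - q) = eval_uniform a p - eval_uniform a q"
  using eval_uniform_add[of a "p - q" q] by (simp add: algebra_simps)

lemma eval_uniform_monomial: "eval_uniform a (frag_of m) = a ^ total_degree m"
  by (simp add: eval_uniform_def)

lemma eval_uniform_mult: "eval_uniform a (p * q) = eval_uniform a p * eval_uniform a q"
proof -
  have monomial_mult: "eval_uniform a (frag_of m * q) = a ^ total_degree m * eval_uniform a q" for m
  proof -
    have "Poly_Mapping.keys q \<subseteq> UNIV" by simp
    then show ?thesis
    proof (induction q rule: frag_induction)
      case (one n)
      then show ?case by (simp add: mult_single eval_uniform_monomial total_degree_add power_add)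
    qed (simp_all add: right_diff_distrib eval_uniform_diff)
  qed
  have "Poly_Mapping.keys p \<subseteq> UNIV" by simp
  then show ?thesis
  proof (induction p rule: frag_induction)
    case (one m)
    then show ?case by (simp add: monomial_mult eval_uniform_monomial)
  qed (simp_all add: left_diff_distrib eval_uniform_diff)
qed

interpretation eval_uniform: comm_ring_hom "eval_uniform a"
  by unfold_locales
    (simp_all add: eval_uniform_add eval_uniform_mult
       eval_uniform_monomial[of a 0, unfolded single_one])

lemma eval_uniform_var [simp]: "eval_uniform a (var v) = a"
  by (simp add: var_def eval_uniform_monomial total_degree_def)

lemma gen_ideal_one: "gen_ideal {1 :: 'r::comm_ring_1} = UNIV"
  unfolding gen_ideal_def by (auto intro!: exI[of _ "{1}"])

lemma gen_ideal_eq_one_if_unit: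
  assumes "u \<in> S" and "u dvd (1 :: 'r::comm_ring_1)"
  shows "gen_ideal S = gen_ideal {1}"
proof -
  obtain v where "u * v = 1" using assms(2) by (metis dvdE)
  then have "x = (\<Sum>s\<in>{u}. (x * v) * s)" for x :: 'r by (simp add: mult.assoc mult.commute[of v u])
  then have "x \<in> gen_ideal S" for x
    unfolding gen_ideal_def using assms(1) by (intro CollectI exI[of _ "{u}"] exI[of _ "\<lambda>_. x * v"]) simp
  then show ?thesis by (auto simp: gen_ideal_one)
qed

lemma (in comm_ring_hom) hom_vanishes_on_gen_ideal:
  assumes "\<And>s. s \<in> S \<Longrightarrow> hom s = 0" and "x \<in> gen_ideal S"
  shows "hom x = 0"
proof -
  obtain F c where "F \<subseteq> S" and "x = (\<Sum>s\<in>F. c s * s)"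
    using assms(2) unfolding gen_ideal_def by blast
  then have "hom x = (\<Sum>s\<in>F. hom (c s) * hom s)" by (simp add: hom_sum hom_mult)
  also have "\<dots> = 0" using \<open>F \<subseteq> S\<close> assms(1) by (intro sum.neutral) auto
  finally show ?thesis .
qed

lemma (in comm_ring_hom) gen_ideal_neq_one_if_hom_vanishes:
  assumes "\<And>s. s \<in> S \<Longrightarrow> hom s = 0"
  shows "gen_ideal S \<noteq> gen_ideal {1}"
proof
  assume "gen_ideal S = gen_ideal {1}"
  then have "1 \<in> gen_ideal S" by (simp add: gen_ideal_one)
  then have "hom 1 = 0" using assms by (rule hom_vanishes_on_gen_ideal[rotated])
  then show False by simp
qed

lemma det_const_mat:
  assumes "2 \<le> n"
  shows "det (mat n n (\<lambda>_. c)) = 0"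
proof (rule det_identical_rows[of _ n 0 1])
  show "row (mat n n (\<lambda>_. c)) 0 = row (mat n n (\<lambda>_. c)) 1"
    using assms by (intro eq_vecI) auto
qed (use assms in simp_all)

definition laplacian_submatrix ::
    "('v \<Rightarrow> 'v \<Rightarrow> bool) \<Rightarrow> nat \<Rightarrow> (nat \<Rightarrow> 'v) \<Rightarrow> (nat \<Rightarrow> 'v) \<Rightarrow> 'v mpoly_int mat" where
  "laplacian_submatrix E i r c = mat i i (\<lambda>(a, b). gen_laplacian E (r a) (c b))"

lemma minors_eq:
  "minors V E i = {det (laplacian_submatrix E i r c) | r c.
     inj_on r {0..<i} \<and> r ` {0..<i} \<subseteq> V \<and> inj_on c {0..<i} \<and> c ` {0..<i} \<subseteq> V}"
  by (simp add: minors_def laplacian_submatrix_def)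

lemma eval_laplacian_submatrix_complete:
  assumes "complete_graph V E" and "r ` {0..<i} \<subseteq> V" and "c ` {0..<i} \<subseteq> V"
  shows "map_mat (eval_uniform (-1)) (laplacian_submatrix E i r c) = mat i i (\<lambda>_. -1 :: int)"
proof (rule eq_matI)
  fix a b assume "a < dim_row (mat i i (\<lambda>_. -1 :: int))" and "b < dim_col (mat i i (\<lambda>_. -1 :: int))"
  then have "a < i" "b < i" "r a \<in> V" "c b \<in> V" using assms(2,3) by auto
  moreover have "E (r a) (c b)" if "r a \<noteq> c b"
    using assms(1) that \<open>r a \<in> V\<close> \<open>c b \<in> V\<close> unfolding complete_graph_def by blast
  ultimately show "map_mat (eval_uniform (-1)) (laplacian_submatrix E i r c) $$ (a, b) =
      mat i i (\<lambda>_. -1) $$ (a, b)"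
    by (auto simp: laplacian_submatrix_def gen_laplacian_def eval_uniform.hom_uminus)
qed (simp_all add: laplacian_submatrix_def)

lemma critical_ideal_complete_neq_one:
  assumes "complete_graph V E" and "2 \<le> i"
  shows "critical_ideal V E i \<noteq> gen_ideal {1}"
proof -
  have "eval_uniform (-1 :: int) m = 0" if "m \<in> minors V E i" for m
  proof -
    obtain r c where m: "m = det (laplacian_submatrix E i r c)"
      and "r ` {0..<i} \<subseteq> V" and "c ` {0..<i} \<subseteq> V"
      using \<open>m \<in> minors V E i\<close> unfolding minors_eq by blast
    then have "eval_uniform (-1) m = det (mat i i (\<lambda>_. -1 :: int))"
      using eval_laplacian_submatrix_complete[OF assms(1)] by (metis eval_uniform.hom_det)
    then show ?thesis using det_const_mat[OF assms(2)] by simp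
  qed
  then show ?thesis
    using assms(2) eval_uniform.gen_ideal_neq_one_if_hom_vanishes[of "minors V E i" "-1 :: int"]
      eval_uniform.gen_ideal_neq_one_if_hom_vanishes[of "{0}" "-1 :: int"]
    unfolding critical_ideal_def by auto
qed

lemma algebraic_corank_complete:
  assumes "complete_graph V E"
  shows "algebraic_corank V E \<le> 1"
proof -
  have "i = 1" if "1 \<le> i" and "critical_ideal V E i = gen_ideal {1}" for i
    using that critical_ideal_complete_neq_one[OF assms, of i] by linarith
  then have "{i \<in> {1..card V}. critical_ideal V E i = gen_ideal {1}} \<subseteq> {1}" by auto
  then show ?thesis
    unfolding algebraic_corank_def using card_mono[of "{1 :: nat}"] by fastforce
qed

definition induced_P3 :: "('v \<Rightarrow> 'v \<Rightarrow> bool) \<Rightarrow> 'v \<Rightarrow> 'v \<Rightarrow> 'v \<Rightarrow> bool" where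
  "induced_P3 E a b c \<longleftrightarrow> E a b \<and> E b c \<and> \<not> E a c \<and> a \<noteq> c"

lemma simple_graph_edgeD:
  assumes "simple_graph V E" and "E u v"
  shows "u \<in> V" and "v \<in> V" and "u \<noteq> v" and "E v u"
  using assms unfolding simple_graph_def by blast+

lemma critical_ideal_eq_one_if_unit_minor:
  assumes "1 \<le> i" and "i \<le> card V" and "u \<in> minors V E i" and "u dvd 1"
  shows "critical_ideal V E i = gen_ideal {1}"
  using assms gen_ideal_eq_one_if_unit[of u "minors V E i"] by (simp add: critical_ideal_def)

lemma det_laplacian_submatrix_edge:
  assumes "E u w" and "u \<noteq> w"
  shows "det (laplacian_submatrix E 1 (\<lambda>_. u) (\<lambda>_. w)) = -1"
proof -
  have "det (laplacian_submatrix E 1 (\<lambda>_. u) (\<lambda>_. w)) =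
      prod_list (diag_mat (laplacian_submatrix E 1 (\<lambda>_. u) (\<lambda>_. w)))"
    by (rule det_lower_triangular[where n = 1]) (auto simp: laplacian_submatrix_def)
  then show ?thesis using assms by (simp add: diag_mat_def laplacian_submatrix_def gen_laplacian_def)
qed

lemma det_laplacian_submatrix_induced_P3:
  assumes "simple_graph V E" and "induced_P3 E u w v"
  defines "r \<equiv> \<lambda>a::nat. if a = 0 then u else w" and "c \<equiv> \<lambda>a::nat. if a = 0 then w else v"
  shows "det (laplacian_submatrix E 2 r c) = 1"
proof -
  have uw: "u \<noteq> w" "w \<noteq> v" "E u w" "E w v" "\<not> E u v" "u \<noteq> v"
    using assms(2) simple_graph_edgeD[OF assms(1)] unfolding induced_P3_def by blast+
  have "det (laplacian_submatrix E 2 r c) = prod_list (diag_mat (laplacian_submatrix E 2 r c))"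
  proof (rule det_lower_triangular[where n = 2])
    fix i j :: nat assume "i < j" and "j < 2"
    then show "laplacian_submatrix E 2 r c $$ (i, j) = 0"
      using uw by (simp add: laplacian_submatrix_def r_def c_def gen_laplacian_def)
  qed (simp add: laplacian_submatrix_def)
  then show ?thesis
    using uw by (simp add: diag_mat_def laplacian_submatrix_def gen_laplacian_def r_def c_def
        upt_conv_Cons)
qed

lemma algebraic_corank_ge_2_if_induced_P3:
  assumes "simple_graph V E" and "induced_P3 E u w v"
  shows "2 \<le> algebraic_corank V E"
proof -
  have uwv: "u \<in> V" "w \<in> V" "v \<in> V" "u \<noteq> w" "w \<noteq> v" "u \<noteq> v" "E u w"
    using assms(2) simple_graph_edgeD[OF assms(1)] unfolding induced_P3_def by blast+
  have "card {u, v} \<le> card V"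
    using uwv assms(1) by (intro card_mono) (auto simp: simple_graph_def)
  then have card_V: "2 \<le> card V" using uwv by simp
  have "det (laplacian_submatrix E 1 (\<lambda>_. u) (\<lambda>_. w)) \<in> minors V E 1"
    using uwv unfolding minors_eq
    by (intro CollectI exI[of _ "\<lambda>_. u"] exI[of _ "\<lambda>_. w"]) (auto simp: inj_on_def)
  then have I1: "critical_ideal V E 1 = gen_ideal {1}"
    using card_V det_laplacian_submatrix_edge[of E u w] uwv
    by (intro critical_ideal_eq_one_if_unit_minor) auto
  define r where "r \<equiv> \<lambda>a::nat. if a = 0 then u else w"
  define c where "c \<equiv> \<lambda>a::nat. if a = 0 then w else v"
  have "inj_on r {0..<2}" "inj_on c {0..<2}" "r ` {0..<2} \<subseteq> V" "c ` {0..<2} \<subseteq> V"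
    using uwv unfolding r_def c_def inj_on_def by auto
  then have "det (laplacian_submatrix E 2 r c) \<in> minors V E 2"
    unfolding minors_eq by blast
  then have I2: "critical_ideal V E 2 = gen_ideal {1}"
    using card_V det_laplacian_submatrix_induced_P3[OF assms] unfolding r_def c_def
    by (intro critical_ideal_eq_one_if_unit_minor) auto
  have "{1, 2} \<subseteq> {i \<in> {1..card V}. critical_ideal V E i = gen_ideal {1}}"
    using I1 I2 card_V by auto
  then have "card {1 :: nat, 2} \<le> algebraic_corank V E"
    unfolding algebraic_corank_def by (intro card_mono) auto
  then show ?thesis by simp
qed

lemma induced_P3_if_reachable:
  assumes "E\<^sup>*\<^sup>* u x"
  shows "x = u \<or> E u x \<or> (\<exists>a b c. induced_P3 E a b c)"
  using assms
proof (induction rule: rtranclp_induct)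
  case (step y z)
  then show ?case unfolding induced_P3_def by blast
qed simp

lemma induced_P3_if_not_complete:
  assumes "connected_graph V E" and "\<not> complete_graph V E"
  shows "\<exists>a b c. induced_P3 E a b c"
proof -
  obtain u v where "u \<in> V" "v \<in> V" "u \<noteq> v" "\<not> E u v"
    using assms(2) unfolding complete_graph_def by blast
  moreover have "E\<^sup>*\<^sup>* u v" using assms(1) \<open>u \<in> V\<close> \<open>v \<in> V\<close> unfolding connected_graph_def by blast
  ultimately show ?thesis using induced_P3_if_reachable by metis
qed

lemma not_P3_free_iff_induced_P3:
  assumes "simple_graph V E"
  shows "\<not> P3_free V E \<longleftrightarrow> (\<exists>a b c. induced_P3 E a b c)"
proof (rule iffI[rotated])
  assume "\<exists>a b c. induced_P3 E a b c"
  then obtain a b c where abc: "E a b" "E b c" "\<not> E a c" "a \<noteq> c"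
    unfolding induced_P3_def by blast
  note edge = simple_graph_edgeD[OF assms]
  define f where "f = (\<lambda>n::nat. if n = 0 then a else if n = 1 then b else c)"
  have "inj_on f {0, 1, 2}" "f ` {0, 1, 2} \<subseteq> V"
    using abc edge[OF abc(1)] edge[OF abc(2)] unfolding f_def inj_on_def by auto
  moreover have "\<forall>i\<in>{0, 1, 2}. \<forall>j\<in>{0, 1, 2}. E (f i) (f j) \<longleftrightarrow> (i = j + 1 \<or> j = i + 1)"
    using abc edge[OF abc(1)] edge[OF abc(2)] edge[of a a] edge[of b b] edge[of c c] edge[of c a]
    unfolding f_def by auto
  ultimately show "\<not> P3_free V E" unfolding P3_free_def by blast
next
  assume "\<not> P3_free V E"
  then obtain f :: "nat \<Rightarrow> 'a" where "inj_on f {0, 1, 2}"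
    and "\<forall>i\<in>{0, 1, 2}. \<forall>j\<in>{0, 1, 2}. E (f i) (f j) \<longleftrightarrow> (i = j + 1 \<or> j = i + 1)"
    unfolding P3_free_def by blast
  then have "induced_P3 E (f 0) (f 1) (f 2)"
    unfolding induced_P3_def inj_on_def by auto
  then show "\<exists>a b c. induced_P3 E a b c" by blast
qed

lemma no_induced_P3_if_complete:
  assumes "simple_graph V E" and "complete_graph V E"
  shows "\<not> induced_P3 E a b c"
  using assms simple_graph_edgeD[OF assms(1)] unfolding complete_graph_def induced_P3_def by blast

theorem theorem3p3:
  fixes V :: "'v set" and E :: "'v \<Rightarrow> 'v \<Rightarrow> bool"
  assumes "simple_graph V E" and "connected_graph V E"
  shows "(algebraic_corank V E \<le> 1 \<longleftrightarrow> P3_free V E) \<and> (P3_free V E \<longleftrightarrow> complete_graph V E)"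
proof (cases "complete_graph V E")
  case True
  then have "algebraic_corank V E \<le> 1" and "P3_free V E"
    using algebraic_corank_complete not_P3_free_iff_induced_P3[OF assms(1)]
      no_induced_P3_if_complete[OF assms(1)] by blast+
  then show ?thesis using True by blast
next
  case False
  then obtain a b c where "induced_P3 E a b c"
    using induced_P3_if_not_complete[OF assms(2)] by blast
  then have "2 \<le> algebraic_corank V E" and "\<not> P3_free V E"
    using algebraic_corank_ge_2_if_induced_P3[OF assms(1)] not_P3_free_iff_induced_P3[OF assms(1)]
    by blast+
  then show ?thesis using False by simp
qed

end
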